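(* Let $\mathfrak K=(K,\bigsqcup,\odot,{}^*,{\sim},e)$ be an involutive generalized dynamic algebra. Then the map $K\to\widetilde K$, $x\mapsto{\sim}{\sim}x$, is a surjective homomorphism of left $K$-modules (where $K$ is a left module over itself via $\odot$ and $\widetilde K$ carries the join $\bigvee$ and action $\bullet$), and $\equiv$ is a quantale congruence on $K$.
   Context: An involutive unital quantale is $(Q,\bigsqcup,\odot,{}^*,e)$: $Q$ a complete join-semilattice, $\odot$ associative and distributing over arbitrary joins in each argument, $e$ a unit, ${}^*$ with $x^{**}=x$, $(x\odot y)^*=y^*\odot x^*$, $(\bigsqcup_i x_i)^*=\bigsqcup_i x_i^*$. An involutive generalized dynamic algebra is $\mathfrak K=(K,\bigsqcup,\odot,{}^*,{\sim},e)$ with $(K,\bigsqcup,\odot,{}^*,e)$ an involutive unital quantale and ${\sim}\colon K\to K$ such that for all $x,y\in K$ and families $(x_i)$: ${\sim}(x\odot{\sim}{\sim}y)={\sim}(x\odot y)$; ${\sim}(\bigsqcup_i{\sim}{\sim}x_i)={\sim}(\bigsqcup_i x_i)$; $({\sim}x)^*={\sim}x$; ${\sim}{\sim}({\sim}{\sim}x\odot y)={\sim}({\sim}x\sqcup{\sim}({\sim}x\sqcup y))$. Test set $\widetilde K=\{{\sim}k\mid k\in K\}$; $\bigvee W={\sim}{\sim}(\bigsqcup W)$ for $W\subseteq\widetilde K$; action $k\bullet v={\sim}{\sim}(k\odot v)$ for $k\in K$, $v\in\widetilde K$ (this makes $(\widetilde K,\bigvee,\bullet)$ a left $K$-module). $k\equiv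 l$ iff $k\bullet w=l\bullet w$ for all $w\in\widetilde K$. A homomorphism of left $K$-modules preserves arbitrary joins and the action. A quantale congruence is an equivalence relation preserving arbitrary joins and multiplication (if $x_i\equiv y_i$ for all $i$ then $\bigsqcup x_i\equiv\bigsqcup y_i$; if $u\equiv v$, $s\equiv t$ then $u\odot s\equiv v\odot t$). *)

theory Defs
  imports Main
begin

text \<open>The carrier K is a type 'a of class complete_lattice; its join is Sup
  (every complete join-semilattice is a complete lattice).
  mult is the quantale multiplication, star the involution, neg the operation ~, e the unit.\<close>

definition involutive_unital_quantale ::
  "('a::complete_lattice \<Rightarrow> 'a \<Rightarrow> 'a) \<Rightarrow> ('a \<Rightarrow> 'a) \<Rightarrow> 'a \<Rightarrow> bool" where
  "involutive_unital_quantale mult star e \<longleftrightarrow>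
     (\<forall>x y z. mult (mult x y) z = mult x (mult y z)) \<and>
     (\<forall>x Y. mult x (Sup Y) = Sup ((\<lambda>y. mult x y) ` Y)) \<and>
     (\<forall>x Y. mult (Sup Y) x = Sup ((\<lambda>y. mult y x) ` Y)) \<and>
     (\<forall>x. mult e x = x \<and> mult x e = x) \<and>
     (\<forall>x. star (star x) = x) \<and>
     (\<forall>x y. star (mult x y) = mult (star y) (star x)) \<and>
     (\<forall>X. star (Sup X) = Sup (star ` X))"

definition involutive_gda ::
  "('a::complete_lattice \<Rightarrow> 'a \<Rightarrow> 'a) \<Rightarrow> ('a \<Rightarrow> 'a) \<Rightarrow> ('a \<Rightarrow> 'a) \<Rightarrow> 'a \<Rightarrow> bool" where
  "involutive_gda mult star neg e \<longleftrightarrow>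
     involutive_unital_quantale mult star e \<and>
     (\<forall>x y. neg (mult x (neg (neg y))) = neg (mult x y)) \<and>
     (\<forall>X. neg (Sup ((\<lambda>x. neg (neg x)) ` X)) = neg (Sup X)) \<and>
     (\<forall>x. star (neg x) = neg x) \<and>
     (\<forall>x y. neg (neg (mult (neg (neg x)) y)) = neg (sup (neg x) (neg (sup (neg x) y))))"

definition tests :: "('a \<Rightarrow> 'a) \<Rightarrow> 'a set" where
  "tests neg = range neg"

definition tjoin :: "('a::complete_lattice \<Rightarrow> 'a) \<Rightarrow> 'a set \<Rightarrow> 'a" where
  "tjoin neg W = neg (neg (Sup W))"

definition tact :: "('a \<Rightarrow> 'a \<Rightarrow> 'a) \<Rightarrow> ('a \<Rightarrow> 'a) \<Rightarrow> 'a \<Rightarrow> 'a \<Rightarrow> 'a" where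
  "tact mult neg k v = neg (neg (mult k v))"

definition tequiv :: "('a \<Rightarrow> 'a \<Rightarrow> 'a) \<Rightarrow> ('a \<Rightarrow> 'a) \<Rightarrow> 'a \<Rightarrow> 'a \<Rightarrow> bool" where
  "tequiv mult neg k l \<longleftrightarrow> (\<forall>w \<in> tests neg. tact mult neg k w = tact mult neg l w)"

definition module_hom_to_tests ::
  "('a::complete_lattice \<Rightarrow> 'a \<Rightarrow> 'a) \<Rightarrow> ('a \<Rightarrow> 'a) \<Rightarrow> ('a \<Rightarrow> 'a) \<Rightarrow> bool" where
  "module_hom_to_tests mult neg h \<longleftrightarrow>
     (\<forall>x. h x \<in> tests neg) \<and>
     (\<forall>X. h (Sup X) = tjoin neg (h ` X)) \<and>
     (\<forall>k x. h (mult k x) = tact mult neg k (h x))"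

text \<open>Quantale congruence; families are indexed by an arbitrary type 'i.\<close>

definition quantale_congruence ::
  "'i itself \<Rightarrow> ('a::complete_lattice \<Rightarrow> 'a \<Rightarrow> 'a) \<Rightarrow> ('a \<Rightarrow> 'a \<Rightarrow> bool) \<Rightarrow> bool" where
  "quantale_congruence _ mult R \<longleftrightarrow>
     equivp R \<and>
     (\<forall>(x::'i \<Rightarrow> 'a) y. (\<forall>i. R (x i) (y i)) \<longrightarrow> R (SUP i. x i) (SUP i. y i)) \<and>
     (\<forall>u v s t. R u v \<longrightarrow> R s t \<longrightarrow> R (mult u s) (mult v t))"

end

theory Submission
  imports Defs
begin

text \<open>Taking \<open>x = e\<close> in \<open>\<sim>(x \<odot> \<sim>\<sim>y) = \<sim>(x \<odot> y)\<close> gives \<open>\<sim>\<sim>\<sim>y = \<sim>y\<close>, so \<open>\<sim>\<sim>\<close>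
  maps \<open>K\<close> onto the tests. That axiom and \<open>\<sim>(\<Squnion>\<sim>\<sim>x\<^sub>i) = \<sim>(\<Squnion>x\<^sub>i)\<close> let \<open>\<sim>\<sim>\<close> be
  inserted or removed inside products and joins, which makes \<open>\<sim>\<sim>\<close> a module homomorphism,
  and also gives \<open>(\<Squnion>k\<^sub>i) \<bullet> w = \<Or>(k\<^sub>i \<bullet> w)\<close> and \<open>(k \<odot> l) \<bullet> w = k \<bullet> (l \<bullet> w)\<close>.
  Since \<open>\<equiv>\<close> is the kernel of \<open>k \<mapsto> (k \<bullet> -)\<close>, these two laws make it a congruence.\<close>

lemma involutive_gdaD:
  assumes "involutive_gda mult star neg e"
  shows "mult (mult x y) z = mult x (mult y z)"
    and "mult (Sup Y) x = Sup ((\<lambda>y. mult y x) ` Y)"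
    and "mult e x = x"
    and "neg (mult x (neg (neg y))) = neg (mult x y)"
    and "neg (Sup ((\<lambda>x. neg (neg x)) ` X)) = neg (Sup X)"
  using assms unfolding involutive_gda_def involutive_unital_quantale_def by auto

lemma neg_neg_neg:
  assumes "\<And>x y. neg (mult x (neg (neg y))) = neg (mult x y)"
    and "\<And>x. mult e x = x"
  shows "neg (neg (neg y)) = neg y"
  using assms(1)[of e] assms(2) by simp

lemma range_neg_neg_eq_tests:
  assumes "\<And>y. neg (neg (neg y)) = neg y"
  shows "range (\<lambda>x. neg (neg x)) = tests neg"
  unfolding tests_def
proof
  show "range neg \<subseteq> range (\<lambda>x. neg (neg x))"
  proof
    fix z assume "z \<in> range neg"
    then obtain y where "z = neg (neg (neg y))" using assms by auto
    then show "z \<in> range (\<lambda>x. neg (neg x))" by blast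
  qed
qed auto

lemma module_hom_to_tests_neg_neg:
  fixes mult :: "'a::complete_lattice \<Rightarrow> 'a \<Rightarrow> 'a"
  assumes "\<And>x y. neg (mult x (neg (neg y))) = neg (mult x y)"
    and "\<And>X. neg (Sup ((\<lambda>x. neg (neg x)) ` X)) = neg (Sup X)"
  shows "module_hom_to_tests mult neg (\<lambda>x. neg (neg x))"
  unfolding module_hom_to_tests_def tests_def tjoin_def tact_def
  using assms by (simp add: image_image)

lemma tact_Sup:
  fixes mult :: "'a::complete_lattice \<Rightarrow> 'a \<Rightarrow> 'a"
  assumes "\<And>x Y. mult (Sup Y) x = Sup ((\<lambda>y. mult y x) ` Y)"
    and "\<And>X. neg (Sup ((\<lambda>x. neg (neg x)) ` X)) = neg (Sup X)"
  shows "tact mult neg (Sup X) w = tjoin neg ((\<lambda>x. tact mult neg x w) ` X)"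
proof -
  have "neg (Sup ((\<lambda>x. tact mult neg x w) ` X)) = neg (Sup ((\<lambda>x. mult x w) ` X))"
    using assms(2)[of "(\<lambda>x. mult x w) ` X"] by (simp add: tact_def image_image)
  then show ?thesis
    by (simp add: tact_def tjoin_def assms(1))
qed

lemma tact_mult:
  assumes "\<And>x y z. mult (mult x y) z = mult x (mult y z)"
    and "\<And>x y. neg (mult x (neg (neg y))) = neg (mult x y)"
  shows "tact mult neg (mult k l) w = tact mult neg k (tact mult neg l w)"
  unfolding tact_def using assms by simp

lemma tact_in_tests: "tact mult neg k w \<in> tests neg"
  unfolding tact_def tests_def by blast

lemma equivp_tequiv: "equivp (tequiv mult neg)"
  by (rule equivpI) (auto simp: reflp_def symp_def transp_def tequiv_def)

lemma tequiv_SUP: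
  fixes mult :: "'a::complete_lattice \<Rightarrow> 'a \<Rightarrow> 'a" and f g :: "'i \<Rightarrow> 'a"
  assumes "\<And>x Y. mult (Sup Y) x = Sup ((\<lambda>y. mult y x) ` Y)"
    and "\<And>X. neg (Sup ((\<lambda>x. neg (neg x)) ` X)) = neg (Sup X)"
    and "\<And>i. tequiv mult neg (f i) (g i)"
  shows "tequiv mult neg (SUP i. f i) (SUP i. g i)"
  unfolding tequiv_def
proof
  fix w assume "w \<in> tests neg"
  then have "tact mult neg (f i) w = tact mult neg (g i) w" for i
    using assms(3) unfolding tequiv_def by blast
  then show "tact mult neg (SUP i. f i) w = tact mult neg (SUP i. g i) w"
    using tact_Sup[where mult = mult and neg = neg, OF assms(1,2)] by (simp add: image_image)
qed

lemma tequiv_mult: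
  assumes "\<And>x y z. mult (mult x y) z = mult x (mult y z)"
    and "\<And>x y. neg (mult x (neg (neg y))) = neg (mult x y)"
    and "tequiv mult neg u v" and "tequiv mult neg s t"
  shows "tequiv mult neg (mult u s) (mult v t)"
  using assms(3,4) tact_in_tests
  unfolding tequiv_def tact_mult[OF assms(1,2)] by metis

theorem proposition3p4:
  fixes mult :: "'a::complete_lattice \<Rightarrow> 'a \<Rightarrow> 'a"
    and star neg :: "'a \<Rightarrow> 'a" and e :: 'a
  assumes "involutive_gda mult star neg e"
  shows "module_hom_to_tests mult neg (\<lambda>x. neg (neg x))
         \<and> (\<lambda>x. neg (neg x)) ` UNIV = tests neg
         \<and> quantale_congruence TYPE('i) mult (tequiv mult neg)"
proof -
  have assoc: "\<And>x y z. mult (mult x y) z = mult x (mult y z)"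
    and Sup_mult: "\<And>x Y. mult (Sup Y) x = Sup ((\<lambda>y. mult y x) ` Y)"
    and unit: "\<And>x. mult e x = x"
    and neg_mult_neg_neg: "\<And>x y. neg (mult x (neg (neg y))) = neg (mult x y)"
    and neg_Sup_neg_neg: "\<And>X. neg (Sup ((\<lambda>x. neg (neg x)) ` X)) = neg (Sup X)"
    using involutive_gdaD[OF assms] by blast+
  have "neg (neg (neg y)) = neg y" for y
    using neg_mult_neg_neg unit by (rule neg_neg_neg)
  then have "range (\<lambda>x. neg (neg x)) = tests neg"
    by (rule range_neg_neg_eq_tests)
  moreover have "quantale_congruence TYPE('i) mult (tequiv mult neg)"
    unfolding quantale_congruence_def
    using equivp_tequiv
      tequiv_SUP[where mult = mult and neg = neg, OF Sup_mult neg_Sup_neg_neg]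
      tequiv_mult[where mult = mult and neg = neg, OF assoc neg_mult_neg_neg]
    by blast
  moreover have "module_hom_to_tests mult neg (\<lambda>x. neg (neg x))"
    using neg_mult_neg_neg neg_Sup_neg_neg by (rule module_hom_to_tests_neg_neg)
  ultimately show ?thesis by blast
qed

end
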